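(* Every $F_{\sigma}$-ideal on $\omega$ is good.
   Context: An ideal on $\omega$ is $F_\sigma$ if it is an $F_\sigma$ subset of $2^\omega$ (via characteristic functions). For an ideal $\mathcal{J}$, $\mathcal{J}^+$ denotes the sets not in $\mathcal{J}$. $\mathcal{J}$ is called good if every uncountable family $\mathcal{F}\subseteq\mathcal{J}^{+}$ has a subfamily $\{B_{n}:n\in\omega\}\subseteq\mathcal{F}$ such that for every $f\in\omega^{\omega}$ there is a sequence $\{C_{n}:n\in\omega\}\subseteq\mathcal{J}$ with $C_{n}\subseteq B_{n}\setminus f(n)$ for every $n$ such that $\bigcup_{n}C_{n}\in\mathcal{J}^{+}$. *)

theory Defs
  imports "HOL-Analysis.Analysis"
begin

definition ideal_on_nat :: "nat set set \<Rightarrow> bool" where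
  "ideal_on_nat J \<longleftrightarrow>
     (\<forall>A B. A \<in> J \<longrightarrow> B \<subseteq> A \<longrightarrow> B \<in> J) \<and>
     (\<forall>A B. A \<in> J \<longrightarrow> B \<in> J \<longrightarrow> A \<union> B \<in> J) \<and>
     (\<forall>A. finite A \<longrightarrow> A \<in> J) \<and>
     UNIV \<notin> J"

text \<open>Characteristic function of a subset of nat, as a point of the Cantor space
  nat => bool (product topology of the discrete space bool).\<close>
definition char_fun :: "nat set \<Rightarrow> (nat \<Rightarrow> bool)" where
  "char_fun A = (\<lambda>n. n \<in> A)"

definition fsigma_ideal :: "nat set set \<Rightarrow> bool" where
  "fsigma_ideal J \<longleftrightarrow> ideal_on_nat J \<and> fsigma_in euclidean (char_fun ` J)"

definition positive_sets :: "nat set set \<Rightarrow> nat set set" where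
  "positive_sets J = {A. A \<notin> J}"

definition good_ideal :: "nat set set \<Rightarrow> bool" where
  "good_ideal J \<longleftrightarrow>
     (\<forall>F. F \<subseteq> positive_sets J \<and> uncountable F \<longrightarrow>
        (\<exists>B :: nat \<Rightarrow> nat set. inj B \<and> range B \<subseteq> F \<and>
           (\<forall>f :: nat \<Rightarrow> nat. \<exists>C :: nat \<Rightarrow> nat set.
              (\<forall>n. C n \<in> J \<and> C n \<subseteq> B n - {..<f n}) \<and>
              (\<Union>n. C n) \<in> positive_sets J)))"

end

theory Submission
  imports Defs
begin

text \<open>Write the F\<sigma> ideal as a countable union of closed sets \<open>K n\<close> of the Cantor space.
  A positive set \<open>B n\<close> and all its finite modifications lie outside \<open>K n\<close>, and since \<open>K n\<close> is
  closed this is already witnessed by a finite initial segment of the characteristic function.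
  So for any sequence of positive sets \<open>B n\<close> one can choose thresholds \<open>a 0 \<le> a 1 \<le> \<dots>\<close>
  recursively: if \<open>D n\<close> is the part of \<open>Z\<close> already fixed below \<open>a n\<close>, every set agreeing with
  \<open>D n \<union> (B n - {..<a n})\<close> below \<open>a (n + 1)\<close> avoids \<open>K n\<close>. The finite pieces
  \<open>C n = B n \<inter> {a n..<a (n + 1)}\<close> then have a union \<open>Z\<close> that is such a set for every \<open>n\<close>,
  so \<open>Z\<close> is positive. (Cutting \<open>B n\<close> below \<open>f n\<close> is a finite modification, so it
  changes nothing.) In particular any countably infinite subfamily witnesses goodness.\<close>

lemma closed_avoid_initial_segment:
  fixes K :: "(nat \<Rightarrow> 'a::topological_space) set"
  assumes "closed K" "x \<notin> K"
  obtains m where "a \<le> m" "\<And>y. (\<forall>i<m. y i = x i) \<Longrightarrow> y \<notin> K"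
proof -
  have "openin (product_topology (\<lambda>i. euclidean) UNIV) (- K)" "x \<in> - K"
    using assms open_fun_def by auto
  from product_topology_open_contains_basis[OF this]
  obtain X where X: "x \<in> (\<Pi>\<^sub>E i\<in>UNIV. X i)" "finite {i. X i \<noteq> UNIV}"
    "(\<Pi>\<^sub>E i\<in>UNIV. X i) \<subseteq> - K"
    by auto
  obtain m0 where "{i. X i \<noteq> UNIV} \<subseteq> {..<m0}"
    using X(2) finite_nat_bounded by blast
  then have m: "{i. X i \<noteq> UNIV} \<subseteq> {..<max a m0}"
    by auto
  show ?thesis
  proof
    show "a \<le> max a m0"
      by simp
    fix y assume "\<forall>i<max a m0. y i = x i"
    moreover have "X i = UNIV" if "\<not> i < max a m0" for i
      using m that by auto
    ultimately have "y i \<in> X i" for i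
      using X(1) by (cases "i < max a m0") auto
    then show "y \<notin> K"
      using X(3) by auto
  qed
qed

lemma UN_Int_lessThan_consecutive_intervals:
  fixes a :: "nat \<Rightarrow> 'a::linorder"
  assumes "incseq a" "\<And>n. C n \<subseteq> {a n..<a (Suc n)}"
  shows "(\<Union>n. C n) \<inter> {..<a k} = (\<Union>j<k. C j)"
proof -
  have "C j \<inter> {..<a k} = {}" if "k \<le> j" for j
    using assms(2)[of j] monoD[OF assms(1) that] by fastforce
  moreover have "C j \<subseteq> {..<a k}" if "j < k" for j
    using assms(2)[of j] monoD[OF assms(1), of "Suc j" k] that by fastforce
  ultimately show ?thesis
    by (fastforce simp: not_less[symmetric])
qed

lemma closed_sequence_avoided_by_union_of_finite_pieces:
  fixes K :: "nat \<Rightarrow> (nat \<Rightarrow> bool) set" and B :: "nat \<Rightarrow> nat set"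
  assumes closed: "\<And>n. closed (K n)"
    and avoid: "\<And>n D E. finite D \<Longrightarrow> finite E \<Longrightarrow> char_fun (D \<union> (B n - E)) \<notin> K n"
  obtains C where "\<And>n. finite (C n)" "\<And>n. C n \<subseteq> B n - {..<f n}"
    "\<And>n. char_fun (\<Union>n. C n) \<notin> K n"
proof -
  define X where "X n a D = D \<union> (B n - {..<max (f n) a})" for n a D
  have threshold_exists:
    "\<exists>m. a \<le> m \<and> (\<forall>y. (\<forall>i<m. y i = char_fun (X n a D) i) \<longrightarrow> y \<notin> K n)"
    if "finite D" for n a D
  proof -
    have "char_fun (X n a D) \<notin> K n"
      unfolding X_def using avoid that by blast
    then show ?thesis
      using closed_avoid_initial_segment[OF closed, of _ n a] by metis
  qed
  define M where
    "M n a D = (SOME m. a \<le> m \<and> (\<forall>y. (\<forall>i<m. y i = char_fun (X n a D) i) \<longrightarrow> y \<notin> K n))"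
    for n a D
  have M: "a \<le> M n a D \<and> (\<forall>y. (\<forall>i<M n a D. y i = char_fun (X n a D) i) \<longrightarrow> y \<notin> K n)"
    if "finite D" for n a D
    unfolding M_def using someI_ex[OF threshold_exists[OF that]] .
  define S where "S = rec_nat (0, {}) (\<lambda>n (a, D). (M n a D, X n a D \<inter> {..<M n a D}))"
  define a where "a n = fst (S n)" for n
  define D where "D n = snd (S n)" for n
  have D_0: "D 0 = {}"
    unfolding D_def S_def by simp
  have a_Suc: "a (Suc n) = M n (a n) (D n)" and D_Suc: "D (Suc n) = X n (a n) (D n) \<inter> {..<a (Suc n)}" for n
    unfolding a_def D_def S_def by (simp_all add: case_prod_beta)
  have D_finite: "finite (D n)" for n
    by (cases n) (simp_all add: D_0 D_Suc)
  have "incseq a"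
    by (rule incseq_SucI) (simp add: a_Suc M D_finite)
  define C where "C n = B n \<inter> {max (f n) (a n)..<a (Suc n)}" for n
  have D_below: "D n \<subseteq> {..<a n}" for n
    by (cases n) (auto simp: D_0 D_Suc)
  have D_Suc_eq: "D (Suc n) = D n \<union> C n" for n
  proof -
    have "D n \<subseteq> {..<a (Suc n)}"
      using D_below[of n] incseq_SucD[OF \<open>incseq a\<close>, of n] by auto
    then show ?thesis
      unfolding D_Suc X_def C_def by auto
  qed
  have D_eq: "D k = (\<Union>j<k. C j)" for k
    by (induction k) (auto simp: D_0 D_Suc_eq lessThan_Suc)
  define Z where "Z = (\<Union>n. C n)"
  have "C n \<subseteq> {a n..<a (Suc n)}" for n
    unfolding C_def by auto
  then have Z_initial_segment: "Z \<inter> {..<a k} = D k" for k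
    unfolding Z_def D_eq by (rule UN_Int_lessThan_consecutive_intervals[OF \<open>incseq a\<close>])
  have "char_fun Z \<notin> K n" for n
  proof -
    have "\<forall>i<a (Suc n). char_fun Z i = char_fun (X n (a n) (D n)) i"
      using Z_initial_segment[of "Suc n"] unfolding D_Suc char_fun_def by blast
    then show ?thesis
      using M[OF D_finite] unfolding a_Suc by blast
  qed
  moreover have "finite (C n)" "C n \<subseteq> B n - {..<f n}" for n
    unfolding C_def by auto
  ultimately show ?thesis
    using that unfolding Z_def by blast
qed

lemma fsigma_ideal_closed_sequence:
  assumes "fsigma_ideal J"
  obtains K :: "nat \<Rightarrow> (nat \<Rightarrow> bool) set"
  where "\<And>n. closed (K n)" "\<And>A. A \<in> J \<longleftrightarrow> (\<exists>n. char_fun A \<in> K n)"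
proof -
  obtain T where T: "countable T" "\<And>c. c \<in> T \<Longrightarrow> closed c" "\<Union>T = char_fun ` J"
    using assms unfolding fsigma_ideal_def fsigma_in_def union_of_def by (auto simp: subset_iff)
  have "{} \<in> J"
    using assms unfolding fsigma_ideal_def ideal_on_nat_def by blast
  then have "T \<noteq> {}"
    using T(3) by auto
  define K where "K = from_nat_into T"
  have range_K: "range K = T"
    unfolding K_def using range_from_nat_into[OF \<open>T \<noteq> {}\<close> T(1)] .
  have "inj char_fun"
    unfolding char_fun_def inj_def by (simp add: fun_eq_iff set_eq_iff)
  then have "A \<in> J \<longleftrightarrow> char_fun A \<in> \<Union>T" for A
    unfolding T(3) by (simp add: inj_image_mem_iff)
  then have "A \<in> J \<longleftrightarrow> (\<exists>n. char_fun A \<in> K n)" for A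
    using range_K by auto
  moreover have "closed (K n)" for n
    using T(2) range_K by auto
  ultimately show ?thesis
    using that by blast
qed

lemma
  assumes "ideal_on_nat J"
  shows ideal_on_nat_subset: "A \<in> J \<Longrightarrow> B \<subseteq> A \<Longrightarrow> B \<in> J"
    and ideal_on_nat_Un: "A \<in> J \<Longrightarrow> B \<in> J \<Longrightarrow> A \<union> B \<in> J"
    and ideal_on_nat_finite: "finite A \<Longrightarrow> A \<in> J"
  using assms unfolding ideal_on_nat_def by blast+

lemma ideal_on_nat_finite_modification_positive:
  assumes J: "ideal_on_nat J" and "B \<notin> J" "finite D" "finite E"
  shows "D \<union> (B - E) \<notin> J"
proof
  assume "D \<union> (B - E) \<in> J"
  then have "(D \<union> (B - E)) \<union> E \<in> J"
    using ideal_on_nat_Un[OF J] ideal_on_nat_finite[OF J \<open>finite E\<close>] by blast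
  moreover have "B \<subseteq> (D \<union> (B - E)) \<union> E"
    by blast
  ultimately show False
    using ideal_on_nat_subset[OF J] \<open>B \<notin> J\<close> by blast
qed

lemma fsigma_ideal_positive_union_of_finite_pieces:
  fixes B :: "nat \<Rightarrow> nat set"
  assumes "fsigma_ideal J" "\<And>n. B n \<notin> J"
  shows "\<exists>C. (\<forall>n. C n \<in> J \<and> C n \<subseteq> B n - {..<f n}) \<and> (\<Union>n. C n) \<notin> J"
proof -
  have J: "ideal_on_nat J"
    using assms(1) unfolding fsigma_ideal_def by blast
  obtain K :: "nat \<Rightarrow> (nat \<Rightarrow> bool) set"
    where closed: "\<And>n. closed (K n)" and J_eq: "\<And>A. A \<in> J \<longleftrightarrow> (\<exists>n. char_fun A \<in> K n)"
    using fsigma_ideal_closed_sequence[OF assms(1)] by metis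
  have avoid: "char_fun (D \<union> (B n - E)) \<notin> K n" if "finite D" "finite E" for n D E
    using ideal_on_nat_finite_modification_positive[OF J assms(2) that] J_eq by blast
  obtain C where "\<And>n. finite (C n)" "\<And>n. C n \<subseteq> B n - {..<f n}"
    "\<And>n. char_fun (\<Union>n. C n) \<notin> K n"
    using closed_sequence_avoided_by_union_of_finite_pieces[of K B f, OF closed avoid] by blast
  then show ?thesis
    using ideal_on_nat_finite[OF J] J_eq by blast
qed

theorem mainTheorem17:
  fixes J :: "nat set set"
  assumes "fsigma_ideal J"
  shows "good_ideal J"
  unfolding good_ideal_def positive_sets_def
proof (intro allI impI)
  fix F assume F: "F \<subseteq> {A. A \<notin> J} \<and> uncountable F"
  then have "infinite F"
    using countable_finite by blast
  then obtain B :: "nat \<Rightarrow> nat set" where B: "inj B" "range B \<subseteq> F"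
    using infinite_countable_subset by blast
  with F have "\<And>n. B n \<notin> J"
    by auto
  then have "\<forall>f. \<exists>C. (\<forall>n. C n \<in> J \<and> C n \<subseteq> B n - {..<f n}) \<and> (\<Union>n. C n) \<in> {A. A \<notin> J}"
    using fsigma_ideal_positive_union_of_finite_pieces[OF assms] by simp
  with B show "\<exists>B :: nat \<Rightarrow> nat set. inj B \<and> range B \<subseteq> F \<and>
      (\<forall>f. \<exists>C. (\<forall>n. C n \<in> J \<and> C n \<subseteq> B n - {..<f n}) \<and> (\<Union>n. C n) \<in> {A. A \<notin> J})"
    by blast
qed

end
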